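(* Let $f=(f_1,f_2):\mathbb{R}^2\to\mathbb{R}^2$ be a smooth one-generic mapping and let $F=(F_1,F_2)$ be as in the context. A point $p\in S_1(f)$ is a simple cusp if and only if $F(p)=\mathbf{0}$ and $DF(p)\cdot\begin{bmatrix}-\frac{\partial J}{\partial y}(p)\\ \frac{\partial J}{\partial x}(p)\end{bmatrix}\ne\mathbf{0}$; equivalently, if and only if $J(p)=0$, $F_1(p)=0$, $F_2(p)=0$, and $\frac{\partial(J,F_1)}{\partial(x,y)}(p)\ne0$ or $\frac{\partial(J,F_2)}{\partial(x,y)}(p)\ne0$.
   Context: $J=\det Df$; $F_i=\frac{\partial(J,f_i)}{\partial(x,y)}=\frac{\partial J}{\partial x}\frac{\partial f_i}{\partial y}-\frac{\partial J}{\partial y}\frac{\partial f_i}{\partial x}$, i.e. $F=Df\cdot(-\partial J/\partial y,\partial J/\partial x)^T$. $f$ is one-generic if $j^1f$ is transverse to the corank-$r$ strata of the 1-jet space for all $r$ (equivalently $dJ\neq0$ on $J^{-1}(0)$, and then $S_1(f)=J^{-1}(0)$ where $S_1(f)=\{p:\operatorname{rank}Df(p)=1\}$). For $p\in S_1(f)$ with $T_pS_1(f)=\ker Df(p)$, $p$ is a simple cusp if $p$ is a simple zero of the function $dJ(\xi)$ on $S_1(f)$, where $\xi$ is a nonvanishing vector field along $S_1(f)$ near $p$ lying in $\ker Df$ (the order of this zero does not depend on the choice of $\xi$). *)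

theory Defs
  imports "HOL-Analysis.Analysis"
begin

text \<open>Points and vectors of the plane are elements of real^2; coordinate 1 is x, coordinate 2 is y.\<close>

definition pd :: "2 \<Rightarrow> (real^2 \<Rightarrow> real) \<Rightarrow> real^2 \<Rightarrow> real" where
  "pd i g p = deriv (\<lambda>t. g (p + t *\<^sub>R axis i 1)) 0"

text \<open>C-infinity on an open set U: differentiable on U with all partial derivatives again C-infinity.\<close>
coinductive smooth_on :: "(real^2) set \<Rightarrow> (real^2 \<Rightarrow> real) \<Rightarrow> bool" where
  "(\<forall>p\<in>U. g differentiable (at p)) \<Longrightarrow> (\<forall>i. smooth_on U (pd i g)) \<Longrightarrow> smooth_on U g"

definition smooth_map :: "(real^2 \<Rightarrow> real^2) \<Rightarrow> bool" where
  "smooth_map f \<longleftrightarrow> (\<forall>i. smooth_on UNIV (\<lambda>q. f q $ i))"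

definition Dmat :: "(real^2 \<Rightarrow> real^2) \<Rightarrow> real^2 \<Rightarrow> real^2^2" where
  "Dmat f p = (\<chi> i j. pd j (\<lambda>q. f q $ i) p)"

definition Jdet :: "(real^2 \<Rightarrow> real^2) \<Rightarrow> real^2 \<Rightarrow> real" where
  "Jdet f p = det (Dmat f p)"

definition jac2 :: "(real^2 \<Rightarrow> real) \<Rightarrow> (real^2 \<Rightarrow> real) \<Rightarrow> real^2 \<Rightarrow> real" where
  "jac2 g h p = pd 1 g p * pd 2 h p - pd 2 g p * pd 1 h p"

definition Fmap :: "(real^2 \<Rightarrow> real^2) \<Rightarrow> real^2 \<Rightarrow> real^2" where
  "Fmap f p = (\<chi> i. jac2 (Jdet f) (\<lambda>q. f q $ i) p)"

definition Jperp :: "(real^2 \<Rightarrow> real^2) \<Rightarrow> real^2 \<Rightarrow> real^2" where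
  "Jperp f p = vector [- pd 2 (Jdet f) p, pd 1 (Jdet f) p]"

definition S1 :: "(real^2 \<Rightarrow> real^2) \<Rightarrow> (real^2) set" where
  "S1 f = {p. rank (Dmat f p) = 1}"

text \<open>One-genericity, in the equivalent form given in the context: dJ does not vanish on J^{-1}(0).\<close>
definition one_generic :: "(real^2 \<Rightarrow> real^2) \<Rightarrow> bool" where
  "one_generic f \<longleftrightarrow> (\<forall>p. Jdet f p = 0 \<longrightarrow> (pd 1 (Jdet f) p, pd 2 (Jdet f) p) \<noteq> (0, 0))"

definition tangent_space :: "(real^2) set \<Rightarrow> real^2 \<Rightarrow> (real^2) set" where
  "tangent_space S p = {v. \<exists>\<gamma> \<delta>. \<delta> > 0 \<and> \<gamma> 0 = p \<and> (\<forall>t\<in>{-\<delta><..<\<delta>}. \<gamma> t \<in> S)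
      \<and> (\<gamma> has_vector_derivative v) (at 0)}"

definition simple_zero_on :: "(real^2) set \<Rightarrow> (real^2) set \<Rightarrow> (real^2 \<Rightarrow> real) \<Rightarrow> real^2 \<Rightarrow> bool" where
  "simple_zero_on S U \<phi> p \<longleftrightarrow> \<phi> p = 0 \<and>
     (\<exists>\<gamma> \<delta> v d. \<delta> > 0 \<and> \<gamma> 0 = p \<and> (\<forall>t\<in>{-\<delta><..<\<delta>}. \<gamma> t \<in> S \<inter> U)
        \<and> (\<gamma> has_vector_derivative v) (at 0) \<and> v \<noteq> 0
        \<and> ((\<phi> \<circ> \<gamma>) has_real_derivative d) (at 0) \<and> d \<noteq> 0)"

definition simple_cusp :: "(real^2 \<Rightarrow> real^2) \<Rightarrow> real^2 \<Rightarrow> bool" where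
  "simple_cusp f p \<longleftrightarrow> p \<in> S1 f \<and>
     tangent_space (S1 f) p = {v. Dmat f p *v v = 0} \<and>
     (\<exists>U \<xi>. open U \<and> p \<in> U \<and> (\<forall>i. smooth_on U (\<lambda>q. \<xi> q $ i)) \<and>
        (\<forall>q\<in>U \<inter> S1 f. \<xi> q \<noteq> 0 \<and> Dmat f q *v \<xi> q = 0) \<and>
        simple_zero_on (S1 f) U
          (\<lambda>q. pd 1 (Jdet f) q * \<xi> q $ 1 + pd 2 (Jdet f) q * \<xi> q $ 2) p)"

end

theory Submission
  imports Defs
begin

text \<open>
  By one-genericity \<open>S\<^sub>1(f)\<close> is the regular level curve \<open>J = 0\<close>, whose tangent line at \<open>p\<close> is
  spanned by \<open>w = (-J\<^sub>y, J\<^sub>x)\<close>; since \<open>Df \<cdot> w = F\<close>, the condition \<open>T\<^sub>pS\<^sub>1(f) = ker Df(p)\<close> says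
  exactly \<open>F(p) = 0\<close>. Near \<open>p\<close> some row \<open>(a, b)\<close> of \<open>Df\<close> is nonzero; \<open>\<xi> = (-b, a)\<close> spans the
  kernel along \<open>S\<^sub>1(f)\<close> and \<open>dJ(\<xi>) = -F\<^sub>i\<close>. Every other kernel field is \<open>h \<xi>\<close>, and on \<open>S\<^sub>1(f)\<close>
  the other component of \<open>F\<close> is a multiple of \<open>F\<^sub>i\<close>. As \<open>F(p) = 0\<close>, differentiating along \<open>S\<^sub>1(f)\<close>
  shows that \<open>p\<close> is a simple zero of \<open>dJ(\<xi>)\<close> iff \<open>DF\<^sub>i(p) \<cdot> w \<noteq> 0\<close>, and that the two components of
  \<open>DF(p) \<cdot> w\<close> vanish together.
\<close>

lemma has_real_derivative_comp_curve:
  assumes "(\<gamma> has_vector_derivative v) (at t)" and "(h has_derivative D) (at (\<gamma> t))"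
  shows "((\<lambda>t. h (\<gamma> t)) has_real_derivative D v) (at t)"
proof -
  have "((\<lambda>t. h (\<gamma> t)) has_derivative (\<lambda>s. D (s *\<^sub>R v))) (at t)"
    using has_derivative_compose[OF assms(1)[unfolded has_vector_derivative_def] assms(2)] .
  moreover have "(\<lambda>s. D (s *\<^sub>R v)) = (*) (D v)"
    using has_derivative_linear[OF assms(2)] by (auto simp: linear_cmul)
  ultimately show ?thesis by (simp add: has_field_derivative_def)
qed

lemma pd_eq_has_derivative:
  assumes "(g has_derivative D) (at p)"
  shows "pd i g p = D (axis i 1)"
proof -
  have "((\<lambda>t. p + t *\<^sub>R axis i 1) has_vector_derivative axis i 1) (at 0)"
    by (auto intro!: derivative_eq_intros simp: has_vector_derivative_def)
  from has_real_derivative_comp_curve[OF this] assms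
  have "((\<lambda>t. g (p + t *\<^sub>R axis i 1)) has_real_derivative D (axis i 1)) (at 0)" by simp
  then show ?thesis unfolding pd_def by (rule DERIV_imp_deriv)
qed

definition grad :: "(real^2 \<Rightarrow> real) \<Rightarrow> real^2 \<Rightarrow> real^2" where
  "grad g q = (\<chi> i. pd i g q)"

lemma grad_inner: "grad g q \<bullet> v = pd 1 g q * v$1 + pd 2 g q * v$2"
  by (simp add: grad_def inner_vec_def sum_2)

lemma has_derivative_grad:
  assumes "g differentiable (at p)"
  shows "(g has_derivative (\<lambda>v. grad g p \<bullet> v)) (at p)"
proof -
  obtain D where D: "(g has_derivative D) (at p)" using assms differentiable_def by blast
  have "D = (\<lambda>v. grad g p \<bullet> v)"
  proof
    fix v :: "real^2"
    have "v = v$1 *\<^sub>R axis 1 1 + v$2 *\<^sub>R axis 2 1"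
      by (simp add: vec_eq_iff forall_2 axis_def)
    then have "D v = D (v$1 *\<^sub>R axis 1 1 + v$2 *\<^sub>R axis 2 1)" by simp
    also have "\<dots> = v$1 * D (axis 1 1) + v$2 * D (axis 2 1)"
      using has_derivative_linear[OF D] by (simp add: linear_add linear_cmul)
    finally show "D v = grad g p \<bullet> v"
      using pd_eq_has_derivative[OF D] by (simp add: grad_inner mult.commute)
  qed
  then show ?thesis using D by simp
qed

lemma pd_add:
  assumes "g differentiable (at q)" "h differentiable (at q)"
  shows "pd i (\<lambda>q. g q + h q) q = pd i g q + pd i h q"
proof -
  obtain Dg Dh where d: "(g has_derivative Dg) (at q)" "(h has_derivative Dh) (at q)"
    using assms unfolding differentiable_def by blast
  show ?thesis
    using pd_eq_has_derivative[OF has_derivative_add[OF d]] pd_eq_has_derivative[OF d(1)]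
      pd_eq_has_derivative[OF d(2)] by simp
qed

lemma pd_diff:
  assumes "g differentiable (at q)" "h differentiable (at q)"
  shows "pd i (\<lambda>q. g q - h q) q = pd i g q - pd i h q"
proof -
  obtain Dg Dh where d: "(g has_derivative Dg) (at q)" "(h has_derivative Dh) (at q)"
    using assms unfolding differentiable_def by blast
  show ?thesis
    using pd_eq_has_derivative[OF has_derivative_diff[OF d]] pd_eq_has_derivative[OF d(1)]
      pd_eq_has_derivative[OF d(2)] by simp
qed

lemma pd_mult:
  assumes "g differentiable (at q)" "h differentiable (at q)"
  shows "pd i (\<lambda>q. g q * h q) q = g q * pd i h q + pd i g q * h q"
proof -
  obtain Dg Dh where d: "(g has_derivative Dg) (at q)" "(h has_derivative Dh) (at q)"
    using assms unfolding differentiable_def by blast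
  show ?thesis
    using pd_eq_has_derivative[OF has_derivative_mult[OF d]] pd_eq_has_derivative[OF d(1)]
      pd_eq_has_derivative[OF d(2)] by simp
qed

lemma pd_const: "pd i (\<lambda>q. c) q = 0"
  using pd_eq_has_derivative[of "\<lambda>q. c" "\<lambda>v. 0"] by simp

lemma proportional_if_cross_eq_0:
  fixes a b c d :: real
  assumes cross: "a * d - b * c = 0" and nz: "(a, b) \<noteq> (0, 0)"
  shows "c = (c * a + d * b) / (a\<^sup>2 + b\<^sup>2) * a" "d = (c * a + d * b) / (a\<^sup>2 + b\<^sup>2) * b"
proof -
  have N: "a\<^sup>2 + b\<^sup>2 \<noteq> 0" using nz by (simp add: sum_power2_eq_zero_iff)
  have "c * (a\<^sup>2 + b\<^sup>2) = (c * a + d * b) * a" "d * (a\<^sup>2 + b\<^sup>2) = (c * a + d * b) * b"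
    using cross by (simp_all add: algebra_simps power2_eq_square)
  then show "c = (c * a + d * b) / (a\<^sup>2 + b\<^sup>2) * a" "d = (c * a + d * b) / (a\<^sup>2 + b\<^sup>2) * b"
    using N by (simp_all add: field_simps)
qed

section \<open>The algebra generated by smooth functions\<close>

text \<open>\<open>smooth_on\<close> is coinductive, so closure of smoothness under ring operations is proved by
  coinduction over the algebra generated by the smooth functions.\<close>

inductive smooth_alg :: "(real^2 \<Rightarrow> real) \<Rightarrow> bool" where
  smooth: "smooth_on UNIV g \<Longrightarrow> smooth_alg g"
| const: "smooth_alg (\<lambda>q. c)"
| add: "smooth_alg g \<Longrightarrow> smooth_alg h \<Longrightarrow> smooth_alg (\<lambda>q. g q + h q)"
| diff: "smooth_alg g \<Longrightarrow> smooth_alg h \<Longrightarrow> smooth_alg (\<lambda>q. g q - h q)"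
| mult: "smooth_alg g \<Longrightarrow> smooth_alg h \<Longrightarrow> smooth_alg (\<lambda>q. g q * h q)"

lemma smooth_alg_differentiable: "smooth_alg g \<Longrightarrow> g differentiable (at p)"
proof (induction rule: smooth_alg.induct)
  case (smooth g)
  then show ?case by (cases rule: smooth_on.cases) auto
qed auto

lemma smooth_alg_pd: "smooth_alg g \<Longrightarrow> smooth_alg (pd i g)"
proof (induction rule: smooth_alg.induct)
  case (smooth g)
  then have "\<forall>i. smooth_on UNIV (pd i g)" by (cases rule: smooth_on.cases) auto
  then show ?case by (simp add: smooth_alg.smooth)
next
  case (const c)
  then show ?case by (simp add: pd_const smooth_alg.const)
next
  case (add g h)
  then have "pd i (\<lambda>q. g q + h q) = (\<lambda>q. pd i g q + pd i h q)"
    by (intro ext pd_add smooth_alg_differentiable)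
  then show ?case using add.IH by (simp add: smooth_alg.add)
next
  case (diff g h)
  then have "pd i (\<lambda>q. g q - h q) = (\<lambda>q. pd i g q - pd i h q)"
    by (intro ext pd_diff smooth_alg_differentiable)
  then show ?case using diff.IH by (simp add: smooth_alg.diff)
next
  case (mult g h)
  then have "pd i (\<lambda>q. g q * h q) = (\<lambda>q. g q * pd i h q + pd i g q * h q)"
    by (intro ext pd_mult smooth_alg_differentiable)
  then show ?case using mult by (simp add: smooth_alg.add smooth_alg.mult)
qed

lemma smooth_on_if_smooth_alg: "smooth_alg g \<Longrightarrow> smooth_on U g"
proof (rule smooth_on.coinduct[where X="\<lambda>_. smooth_alg"])
  fix U g assume "smooth_alg g"
  then show "\<exists>U' g'. U = U' \<and> g = g' \<and> (\<forall>p\<in>U'. g' differentiable (at p)) \<and>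
      (\<forall>i. smooth_alg (pd i g') \<or> smooth_on U' (pd i g'))"
    using smooth_alg_differentiable smooth_alg_pd by blast
qed

lemma has_derivative_grad_smooth_alg:
  "smooth_alg g \<Longrightarrow> (g has_derivative (\<lambda>v. grad g q \<bullet> v)) (at q)"
  by (rule has_derivative_grad[OF smooth_alg_differentiable])

lemma isCont_smooth_alg: "smooth_alg g \<Longrightarrow> isCont g q"
  using smooth_alg_differentiable differentiable_imp_continuous_within by blast

lemma isCont_grad_smooth_alg: "smooth_alg g \<Longrightarrow> isCont (grad g) q"
  unfolding isCont_def grad_def using isCont_smooth_alg[OF smooth_alg_pd]
  by (intro vec_tendstoI) (simp add: isCont_def)

section \<open>Curves in a regular level set\<close>

lemma increment_ge_along_line:
  fixes J :: "'a::real_inner \<Rightarrow> real"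
  assumes der: "\<And>q. (J has_derivative (\<lambda>v. G q \<bullet> v)) (at q)"
    and slope: "\<And>t. t1 \<le> t \<Longrightarrow> t \<le> t2 \<Longrightarrow> c \<le> G (x + t *\<^sub>R a) \<bullet> a"
    and "t1 \<le> t2"
  shows "(t2 - t1) * c \<le> J (x + t2 *\<^sub>R a) - J (x + t1 *\<^sub>R a)"
proof (cases "t1 = t2")
  case False
  have "((\<lambda>t. x + t *\<^sub>R a) has_vector_derivative a) (at t)" for t
    by (auto intro!: derivative_eq_intros simp: has_vector_derivative_def)
  then have "((\<lambda>t. J (x + t *\<^sub>R a)) has_real_derivative G (x + t *\<^sub>R a) \<bullet> a) (at t)" for t
    using has_real_derivative_comp_curve[OF _ der] by blast
  then obtain z where "t1 < z" "z < t2"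
    "J (x + t2 *\<^sub>R a) - J (x + t1 *\<^sub>R a) = (t2 - t1) * (G (x + z *\<^sub>R a) \<bullet> a)"
    using MVT2[of t1 t2 "\<lambda>t. J (x + t *\<^sub>R a)"] False \<open>t1 \<le> t2\<close> by force
  then show ?thesis using slope[of z] \<open>t1 \<le> t2\<close> by (simp add: mult_left_mono)
qed simp

lemma small_combination_norm:
  fixes w a :: "'a::real_normed_vector"
  assumes "r > 0"
  obtains e where "e > 0" "\<And>s t. \<bar>s\<bar> \<le> e \<Longrightarrow> \<bar>t\<bar> \<le> e \<Longrightarrow> norm (s *\<^sub>R w + t *\<^sub>R a) < r"
proof
  define N where "N = norm w + norm a + 1"
  have N: "N > 0" by (simp add: N_def add_nonneg_pos)
  show "r / (2 * N) > 0" using assms N by simp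
  fix s t assume st: "\<bar>s\<bar> \<le> r / (2 * N)" "\<bar>t\<bar> \<le> r / (2 * N)"
  have "\<bar>s\<bar> * norm w + \<bar>t\<bar> * norm a \<le> r / (2 * N) * norm w + r / (2 * N) * norm a"
    using st by (intro add_mono mult_right_mono) simp_all
  also have "\<dots> = r / (2 * N) * (norm w + norm a)" by (simp add: distrib_left)
  also have "\<dots> < r / (2 * N) * N"
    using assms N by (intro mult_strict_left_mono) (simp_all add: N_def)
  also have "\<dots> < r" using assms N by simp
  finally show "norm (s *\<^sub>R w + t *\<^sub>R a) < r"
    using norm_triangle_ineq[of "s *\<^sub>R w" "t *\<^sub>R a"] by simp
qed

lemma transversal_increment_bound:
  fixes J :: "'a::real_inner \<Rightarrow> real"
  assumes der: "\<And>q. (J has_derivative (\<lambda>v. G q \<bullet> v)) (at q)"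
    and cont: "isCont G p" and nz: "G p \<noteq> 0"
  obtains e where "e > 0"
    "\<And>s t1 t2. \<bar>s\<bar> \<le> e \<Longrightarrow> -e \<le> t1 \<Longrightarrow> t1 \<le> t2 \<Longrightarrow> t2 \<le> e \<Longrightarrow>
       (t2 - t1) * (G p \<bullet> G p / 2) \<le> J (p + s *\<^sub>R w + t2 *\<^sub>R G p) - J (p + s *\<^sub>R w + t1 *\<^sub>R G p)"
proof -
  define a where "a = G p"
  have "((\<lambda>q. G q \<bullet> a) \<longlongrightarrow> a \<bullet> a) (nhds p)"
    using cont unfolding isCont_def tendsto_at_iff_tendsto_nhds a_def by (intro tendsto_intros)
  then have "eventually (\<lambda>q. a \<bullet> a / 2 < G q \<bullet> a) (nhds p)"
    using nz by (intro order_tendstoD(1)) (auto simp: a_def)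
  then obtain r where "r > 0" and slope: "\<And>q. dist q p < r \<Longrightarrow> a \<bullet> a / 2 < G q \<bullet> a"
    unfolding eventually_nhds_metric by (auto simp: dist_commute)
  then obtain e where e: "e > 0" and small: "\<And>s t. \<bar>s\<bar> \<le> e \<Longrightarrow> \<bar>t\<bar> \<le> e \<Longrightarrow> norm (s *\<^sub>R w + t *\<^sub>R a) < r"
    using small_combination_norm by blast
  show ?thesis
  proof (rule that[OF e])
    fix s t1 t2 :: real assume s: "\<bar>s\<bar> \<le> e" "-e \<le> t1" "t1 \<le> t2" "t2 \<le> e"
    have "a \<bullet> a / 2 \<le> G (p + s *\<^sub>R w + t *\<^sub>R a) \<bullet> a" if "t1 \<le> t" "t \<le> t2" for t
      using slope[of "p + s *\<^sub>R w + t *\<^sub>R a"] small[of s t] that s by (simp add: dist_norm abs_le_iff)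
    from increment_ge_along_line[OF der this s(3)]
    show "(t2 - t1) * (G p \<bullet> G p / 2) \<le> J (p + s *\<^sub>R w + t2 *\<^sub>R G p) - J (p + s *\<^sub>R w + t1 *\<^sub>R G p)"
      unfolding a_def .
  qed
qed

lemma transversal_sign_change:
  fixes J :: "'a::real_inner \<Rightarrow> real"
  assumes der: "\<And>q. (J has_derivative (\<lambda>v. G q \<bullet> v)) (at q)"
    and cont: "isCont G p" and nz: "G p \<noteq> 0" and zero: "J p = 0"
  obtains t0 \<delta> where "t0 > 0" "\<delta> > 0"
    "\<And>s. \<bar>s\<bar> < \<delta> \<Longrightarrow> J (p + s *\<^sub>R w + (-t0) *\<^sub>R G p) < 0 \<and> 0 < J (p + s *\<^sub>R w + t0 *\<^sub>R G p)"
    "\<And>s t1 t2. \<bar>s\<bar> < \<delta> \<Longrightarrow> -t0 \<le> t1 \<Longrightarrow> t1 \<le> t2 \<Longrightarrow> t2 \<le> t0 \<Longrightarrow>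
       (t2 - t1) * (G p \<bullet> G p / 2) \<le> J (p + s *\<^sub>R w + t2 *\<^sub>R G p) - J (p + s *\<^sub>R w + t1 *\<^sub>R G p)"
proof -
  define c where "c = G p \<bullet> G p / 2"
  have c: "c > 0" using nz by (simp add: c_def)
  obtain t0 where t0: "t0 > 0" and incr:
    "\<And>s t1 t2. \<bar>s\<bar> \<le> t0 \<Longrightarrow> -t0 \<le> t1 \<Longrightarrow> t1 \<le> t2 \<Longrightarrow> t2 \<le> t0 \<Longrightarrow>
       (t2 - t1) * c \<le> J (p + s *\<^sub>R w + t2 *\<^sub>R G p) - J (p + s *\<^sub>R w + t1 *\<^sub>R G p)"
    using transversal_increment_bound[OF der cont nz, of w] unfolding c_def by blast
  have "t0 * c \<le> J (p + t0 *\<^sub>R G p)" using incr[of 0 0 t0] t0 zero by simp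
  then have pos: "0 < J (p + 0 *\<^sub>R w + t0 *\<^sub>R G p)" using mult_pos_pos[OF t0 c] by simp
  have "t0 * c \<le> - J (p + (-t0) *\<^sub>R G p)" using incr[of 0 "-t0" 0] t0 zero by simp
  then have neg: "J (p + 0 *\<^sub>R w + (-t0) *\<^sub>R G p) < 0" using mult_pos_pos[OF t0 c] by simp
  have "isCont (\<lambda>s. J (p + s *\<^sub>R w + t *\<^sub>R G p)) 0" for t
    by (intro continuous_at_compose[OF _ has_derivative_continuous[OF der], unfolded o_def])
      (intro continuous_intros)
  then have lim: "((\<lambda>s. J (p + s *\<^sub>R w + t *\<^sub>R G p)) \<longlongrightarrow> J (p + 0 *\<^sub>R w + t *\<^sub>R G p)) (nhds 0)" for t
    unfolding isCont_def by (rule tendsto_at_iff_tendsto_nhds[THEN iffD1])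
  have "eventually (\<lambda>s. J (p + s *\<^sub>R w + (-t0) *\<^sub>R G p) < 0 \<and> 0 < J (p + s *\<^sub>R w + t0 *\<^sub>R G p)) (nhds 0)"
    using order_tendstoD(2)[OF lim neg] order_tendstoD(1)[OF lim pos] by (rule eventually_conj)
  then obtain d1 where "d1 > 0"
    and "\<And>s. \<bar>s\<bar> < d1 \<Longrightarrow> J (p + s *\<^sub>R w + (-t0) *\<^sub>R G p) < 0 \<and> 0 < J (p + s *\<^sub>R w + t0 *\<^sub>R G p)"
    unfolding eventually_nhds_metric by (auto simp: dist_real_def)
  then show ?thesis
    using that[of t0 "min t0 d1"] t0 incr unfolding c_def by simp
qed

text \<open>The zero set of \<open>J\<close> near a regular zero \<open>p\<close> is parametrised as
  \<open>s \<mapsto> p + s w + \<tau>(s) \<nabla>J(p)\<close>, with \<open>\<tau>(s)\<close> found by the intermediate value theorem along the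
  gradient direction; \<open>|\<tau>(s)| \<le> C |J(p + s w)| = o(s)\<close> when \<open>w \<perp> \<nabla>J(p)\<close>.\<close>

lemma zero_set_section:
  fixes J :: "'a::real_inner \<Rightarrow> real"
  assumes der: "\<And>q. (J has_derivative (\<lambda>v. G q \<bullet> v)) (at q)"
    and cont: "isCont G p" and nz: "G p \<noteq> 0" and zero: "J p = 0"
  obtains \<delta> \<tau> where "\<delta> > 0"
    "\<And>s. \<bar>s\<bar> < \<delta> \<Longrightarrow> J (p + s *\<^sub>R w + \<tau> s *\<^sub>R G p) = 0"
    "\<And>s. \<bar>s\<bar> < \<delta> \<Longrightarrow> \<bar>\<tau> s\<bar> * (G p \<bullet> G p / 2) \<le> \<bar>J (p + s *\<^sub>R w)\<bar>"
proof -
  obtain t0 \<delta> where t0: "t0 > 0" and \<delta>: "\<delta> > 0"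
    and signs: "\<And>s. \<bar>s\<bar> < \<delta> \<Longrightarrow> J (p + s *\<^sub>R w + (-t0) *\<^sub>R G p) < 0 \<and> 0 < J (p + s *\<^sub>R w + t0 *\<^sub>R G p)"
    and incr: "\<And>s t1 t2. \<bar>s\<bar> < \<delta> \<Longrightarrow> -t0 \<le> t1 \<Longrightarrow> t1 \<le> t2 \<Longrightarrow> t2 \<le> t0 \<Longrightarrow>
       (t2 - t1) * (G p \<bullet> G p / 2) \<le> J (p + s *\<^sub>R w + t2 *\<^sub>R G p) - J (p + s *\<^sub>R w + t1 *\<^sub>R G p)"
    using transversal_sign_change[OF der cont nz zero, of w] by blast
  have "\<exists>t. -t0 \<le> t \<and> t \<le> t0 \<and> J (p + s *\<^sub>R w + t *\<^sub>R G p) = 0" if "\<bar>s\<bar> < \<delta>" for s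
  proof -
    have "continuous_on {-t0..t0} (\<lambda>t. J (p + s *\<^sub>R w + t *\<^sub>R G p))"
      by (intro continuous_at_imp_continuous_on ballI
          continuous_at_compose[OF _ has_derivative_continuous[OF der], unfolded o_def])
        (intro continuous_intros)
    then show ?thesis
      using IVT'[of "\<lambda>t. J (p + s *\<^sub>R w + t *\<^sub>R G p)" "-t0" 0 t0] signs[OF that] t0 by force
  qed
  then obtain \<tau> where \<tau>: "\<And>s. \<bar>s\<bar> < \<delta> \<Longrightarrow> -t0 \<le> \<tau> s \<and> \<tau> s \<le> t0 \<and> J (p + s *\<^sub>R w + \<tau> s *\<^sub>R G p) = 0"
    by metis
  have "\<bar>\<tau> s\<bar> * (G p \<bullet> G p / 2) \<le> \<bar>J (p + s *\<^sub>R w)\<bar>" if s: "\<bar>s\<bar> < \<delta>" for s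
  proof (cases "\<tau> s \<ge> 0")
    case True
    then show ?thesis using incr[of s 0 "\<tau> s"] \<tau>[OF s] s t0 by simp
  next
    case False
    then show ?thesis using incr[of s "\<tau> s" 0] \<tau>[OF s] s t0 by simp
  qed
  then show ?thesis using that \<delta> \<tau> by blast
qed

lemma zero_set_curve:
  fixes J :: "'a::real_inner \<Rightarrow> real"
  assumes der: "\<And>q. (J has_derivative (\<lambda>v. G q \<bullet> v)) (at q)"
    and cont: "isCont G p" and nz: "G p \<noteq> 0" and zero: "J p = 0" and perp: "G p \<bullet> w = 0"
  obtains \<gamma> \<delta> where "\<delta> > 0" "\<gamma> 0 = p" "\<forall>t\<in>{-\<delta><..<\<delta>}. J (\<gamma> t) = 0"
    "(\<gamma> has_vector_derivative w) (at 0)"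
proof -
  define c where "c = G p \<bullet> G p / 2"
  have c: "c > 0" using nz by (simp add: c_def)
  obtain \<delta> \<tau> where \<delta>: "\<delta> > 0"
    and on_zero_set: "\<And>s. \<bar>s\<bar> < \<delta> \<Longrightarrow> J (p + s *\<^sub>R w + \<tau> s *\<^sub>R G p) = 0"
    and bound: "\<And>s. \<bar>s\<bar> < \<delta> \<Longrightarrow> \<bar>\<tau> s\<bar> * c \<le> \<bar>J (p + s *\<^sub>R w)\<bar>"
    using zero_set_section[OF der cont nz zero, of w] unfolding c_def by blast
  have \<tau>0: "\<tau> 0 = 0" using bound[of 0] \<delta> zero c by (simp add: mult_le_0_iff)
  have "((\<lambda>s. p + s *\<^sub>R w) has_vector_derivative w) (at 0)"
    by (auto intro!: derivative_eq_intros simp: has_vector_derivative_def)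
  from has_real_derivative_comp_curve[OF this, of J, simplified, OF der[of p]] perp
  have "((\<lambda>s. J (p + s *\<^sub>R w)) has_real_derivative 0) (at 0)" by simp
  then have "((\<lambda>s. J (p + s *\<^sub>R w) / s) \<longlongrightarrow> 0) (at 0)"
    using zero by (simp add: has_field_derivative_iff)
  then have "((\<lambda>s. \<bar>J (p + s *\<^sub>R w) / s\<bar> / c) \<longlongrightarrow> 0) (at 0)"
    by (intro tendsto_divide_zero tendsto_rabs_zero)
  moreover have "eventually (\<lambda>s. norm (\<tau> s / s) \<le> \<bar>J (p + s *\<^sub>R w) / s\<bar> / c) (at 0)"
  proof -
    have "eventually (\<lambda>s. \<bar>s\<bar> < \<delta>) (at (0::real))"
      using \<delta> by (auto simp: eventually_at intro!: exI[of _ \<delta>])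
    then show ?thesis
    proof eventually_elim
      case (elim s)
      have "\<bar>\<tau> s\<bar> \<le> \<bar>J (p + s *\<^sub>R w)\<bar> / c" using bound[OF elim] c by (simp add: field_simps)
      then have "\<bar>\<tau> s\<bar> / \<bar>s\<bar> \<le> \<bar>J (p + s *\<^sub>R w)\<bar> / c / \<bar>s\<bar>"
        by (rule divide_right_mono) simp
      then show ?case by (simp add: abs_divide divide_divide_eq_left mult.commute)
    qed
  qed
  ultimately have "((\<lambda>s. \<tau> s / s) \<longlongrightarrow> 0) (at 0)" by (rule Lim_null_comparison[rotated])
  then have "(\<tau> has_real_derivative 0) (at 0)" using \<tau>0 by (simp add: has_field_derivative_iff)
  then have "((\<lambda>s. p + s *\<^sub>R w + \<tau> s *\<^sub>R G p) has_vector_derivative w) (at 0)"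
    using \<tau>0 by (auto intro!: derivative_eq_intros
        simp: has_vector_derivative_def has_field_derivative_def)
  then show ?thesis using that[of \<delta> "\<lambda>s. p + s *\<^sub>R w + \<tau> s *\<^sub>R G p"] \<delta> on_zero_set \<tau>0 by force
qed

lemma eventually_curve_in:
  assumes "(\<gamma> has_vector_derivative v) (at 0)" "\<delta> > 0" "\<forall>t\<in>{-\<delta><..<\<delta>}. \<gamma> t \<in> S"
    and "open U" "\<gamma> 0 \<in> U"
  shows "eventually (\<lambda>t. \<gamma> t \<in> S \<inter> U) (nhds 0)"
proof -
  have "eventually (\<lambda>t. \<gamma> t \<in> U) (nhds 0)"
    using has_vector_derivative_continuous[OF assms(1)] assms(4,5)
    by (metis isCont_def tendsto_at_iff_tendsto_nhds topological_tendstoD)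
  moreover have "eventually (\<lambda>t. t \<in> {-\<delta><..<\<delta>}) (nhds (0::real))"
    using assms(2) by (intro eventually_nhds_in_open) auto
  ultimately have "eventually (\<lambda>t. \<gamma> t \<in> U \<and> t \<in> {-\<delta><..<\<delta>}) (nhds 0)"
    by (rule eventually_conj)
  then show ?thesis by (rule eventually_mono) (use assms(3) in auto)
qed

lemma has_real_derivative_along_factorization:
  assumes \<gamma>: "(\<gamma> has_vector_derivative v) (at 0)" "\<gamma> 0 = p"
    and dA: "((\<lambda>t. A (\<gamma> t)) has_real_derivative d) (at 0)"
    and B: "(B has_derivative (\<lambda>u. GB \<bullet> u)) (at p)" "B p = 0"
    and h: "h differentiable (at p)"
    and factor: "eventually (\<lambda>t. A (\<gamma> t) = h (\<gamma> t) * B (\<gamma> t)) (nhds 0)"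
  shows "d = h p * (GB \<bullet> v)"
proof -
  obtain Dh where Dh: "(h has_derivative Dh) (at p)" using h differentiable_def by blast
  have "((\<lambda>t. h (\<gamma> t)) has_real_derivative Dh v) (at 0)"
    using has_real_derivative_comp_curve[OF \<gamma>(1)] Dh \<gamma>(2) by simp
  moreover have "((\<lambda>t. B (\<gamma> t)) has_real_derivative GB \<bullet> v) (at 0)"
    using has_real_derivative_comp_curve[OF \<gamma>(1)] B(1) \<gamma>(2) by simp
  ultimately have "((\<lambda>t. h (\<gamma> t) * B (\<gamma> t)) has_real_derivative Dh v * B (\<gamma> 0) + GB \<bullet> v * h (\<gamma> 0)) (at 0)"
    by (rule DERIV_mult)
  then have "((\<lambda>t. A (\<gamma> t)) has_real_derivative h p * (GB \<bullet> v)) (at 0)"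
    using DERIV_cong_ev[OF refl factor refl] \<gamma>(2) B(2) by (simp add: mult.commute)
  then show ?thesis using dA DERIV_unique by blast
qed

locale one_generic_map =
  fixes f :: "real^2 \<Rightarrow> real^2"
  assumes smooth: "smooth_map f" and one_generic: "one_generic f"
begin

abbreviation df :: "2 \<Rightarrow> 2 \<Rightarrow> real^2 \<Rightarrow> real" where
  "df i j \<equiv> pd j (\<lambda>q. f q $ i)"

lemma smooth_alg_df: "smooth_alg (df i j)"
  using smooth by (simp add: smooth_map_def smooth_alg.smooth smooth_alg_pd)

lemma Jdet_eq: "Jdet f = (\<lambda>q. df 1 1 q * df 2 2 q - df 1 2 q * df 2 1 q)"
  by (simp add: fun_eq_iff Jdet_def det_2 Dmat_def)

lemma smooth_alg_Jdet: "smooth_alg (Jdet f)"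
  unfolding Jdet_eq by (intro smooth_alg.diff smooth_alg.mult smooth_alg_df)

lemma Fmap_nth: "Fmap f q $ i = pd 1 (Jdet f) q * df i 2 q - pd 2 (Jdet f) q * df i 1 q"
  by (simp add: Fmap_def jac2_def)

lemma smooth_alg_Fmap: "smooth_alg (\<lambda>q. Fmap f q $ i)"
  unfolding Fmap_nth by (intro smooth_alg.diff smooth_alg.mult smooth_alg_df smooth_alg_pd smooth_alg_Jdet)

lemma Dmat_mult_nth: "(Dmat f q *v v) $ i = df i 1 q * v$1 + df i 2 q * v$2"
  by (simp add: matrix_vector_mult_def sum_2 Dmat_def)

lemma Dmat_mult_Jperp: "Dmat f q *v Jperp f q = Fmap f q"
  by (simp add: vec_eq_iff forall_2 Dmat_mult_nth Fmap_nth Jperp_def algebra_simps)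

lemma grad_Fmap_inner_Jperp: "grad (\<lambda>q. Fmap f q $ i) q \<bullet> Jperp f q = jac2 (Jdet f) (\<lambda>q. Fmap f q $ i) q"
  by (simp add: grad_inner Jperp_def jac2_def algebra_simps)

lemma rows_cross_eq_0:
  assumes "Jdet f q = 0"
  shows "df i 1 q * df k 2 q - df i 2 q * df k 1 q = 0"
  using assms exhaust_2[of i] exhaust_2[of k] by (auto simp: Jdet_eq algebra_simps)

lemma Dmat_nonzero_if_Jdet_eq_0:
  assumes "Jdet f q = 0"
  shows "Dmat f q \<noteq> 0"
proof
  assume "Dmat f q = 0"
  have "df i j q = 0" for i j
    using arg_cong[where f="\<lambda>M. M $ i $ j", OF \<open>Dmat f q = 0\<close>] by (simp add: Dmat_def)
  then have "pd k (Jdet f) q = 0" for k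
    unfolding Jdet_eq by (simp add: pd_diff pd_mult smooth_alg_differentiable smooth_alg_df
        differentiable_mult)
  then show False using one_generic assms unfolding one_generic_def by blast
qed

lemma S1_iff_Jdet_eq_0: "q \<in> S1 f \<longleftrightarrow> Jdet f q = 0"
proof -
  have "rank (Dmat f q) \<le> 2" using rank_bound[of "Dmat f q"] by simp
  then have "q \<in> S1 f \<longleftrightarrow> Jdet f q = 0 \<and> Dmat f q \<noteq> 0"
    using det_eq_0_rank[of "Dmat f q"] rank_eq_0[of "Dmat f q"] by (auto simp: S1_def Jdet_def)
  then show ?thesis using Dmat_nonzero_if_Jdet_eq_0 by blast
qed

definition regular_row :: "2 \<Rightarrow> (real^2) set" where
  "regular_row i = {q. (df i 1 q, df i 2 q) \<noteq> (0, 0)}"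

lemma open_regular_row: "open (regular_row i)"
proof -
  have "regular_row i = {q. 0 < (df i 1 q)\<^sup>2 + (df i 2 q)\<^sup>2}"
    by (auto simp: regular_row_def sum_power2_gt_zero_iff)
  moreover have "continuous_on UNIV (df i j)" for j
    using isCont_smooth_alg[OF smooth_alg_df] by (simp add: continuous_at_imp_continuous_on)
  ultimately show ?thesis
    by (simp only:) (intro open_Collect_less continuous_intros)
qed

lemma S1_subset_regular_row: "q \<in> S1 f \<Longrightarrow> \<exists>i. q \<in> regular_row i"
  using Dmat_nonzero_if_Jdet_eq_0 S1_iff_Jdet_eq_0
  by (auto simp: regular_row_def vec_eq_iff forall_2 Dmat_def)

lemma grad_Jdet_inner_Jperp: "grad (Jdet f) q \<bullet> Jperp f q = 0"
  by (simp add: grad_inner Jperp_def)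

definition row_kernel_field :: "2 \<Rightarrow> real^2 \<Rightarrow> real^2" where
  "row_kernel_field i q = vector [- df i 2 q, df i 1 q]"

lemma smooth_on_row_kernel_field: "smooth_on U (\<lambda>q. row_kernel_field i q $ j)"
proof -
  have "(\<lambda>q. row_kernel_field i q $ 1) = (\<lambda>q. 0 - df i 2 q)" "(\<lambda>q. row_kernel_field i q $ 2) = df i 1"
    by (simp_all add: row_kernel_field_def)
  moreover have "smooth_on U (\<lambda>q. 0 - df i 2 q)" "smooth_on U (df i 1)"
    by (intro smooth_on_if_smooth_alg smooth_alg.diff smooth_alg.const smooth_alg_df)+
  ultimately show ?thesis using exhaust_2[of j] by auto
qed

lemma row_kernel_field_in_kernel:
  assumes "q \<in> S1 f" "q \<in> regular_row i"
  shows "row_kernel_field i q \<noteq> 0" "Dmat f q *v row_kernel_field i q = 0"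
proof -
  have "(Dmat f q *v row_kernel_field i q) $ k = 0" for k
    using rows_cross_eq_0[of q k i] assms(1) S1_iff_Jdet_eq_0
    by (simp add: Dmat_mult_nth row_kernel_field_def algebra_simps)
  then show "Dmat f q *v row_kernel_field i q = 0" by (simp add: vec_eq_iff)
  show "row_kernel_field i q \<noteq> 0"
    using assms(2) by (auto simp: regular_row_def row_kernel_field_def vec_eq_iff forall_2)
qed

lemma dJ_row_kernel_field:
  "pd 1 (Jdet f) q * row_kernel_field i q $ 1 + pd 2 (Jdet f) q * row_kernel_field i q $ 2
    = - Fmap f q $ i"
  by (simp add: row_kernel_field_def Fmap_nth algebra_simps)

lemma row_orthogonal_proportional:
  fixes v :: "real^2"
  assumes "q \<in> regular_row i" and "df i 1 q * v$1 + df i 2 q * v$2 = 0"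
  shows "v = ((v$1 * - df i 2 q + v$2 * df i 1 q) / ((df i 2 q)\<^sup>2 + (df i 1 q)\<^sup>2)) *\<^sub>R
      row_kernel_field i q"
proof -
  have "- df i 2 q * v$2 - df i 1 q * v$1 = 0" using assms(2) by simp
  from proportional_if_cross_eq_0[OF this] assms(1) show ?thesis
    by (auto simp: regular_row_def row_kernel_field_def vec_eq_iff forall_2)
qed

lemma Fmap_proportional_on_S1:
  assumes "q \<in> S1 f" "q \<in> regular_row i"
  shows "Fmap f q $ k = (df k 1 q * df i 1 q + df k 2 q * df i 2 q) / ((df i 1 q)\<^sup>2 + (df i 2 q)\<^sup>2)
      * Fmap f q $ i"
proof -
  have "df i 1 q * df k 2 q - df i 2 q * df k 1 q = 0"
    using assms(1) S1_iff_Jdet_eq_0 rows_cross_eq_0 by blast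
  note proportional = proportional_if_cross_eq_0[OF this]
  define c where
    "c = (df k 1 q * df i 1 q + df k 2 q * df i 2 q) / ((df i 1 q)\<^sup>2 + (df i 2 q)\<^sup>2)"
  have "df k 1 q = c * df i 1 q" "df k 2 q = c * df i 2 q"
    using proportional assms(2) by (simp_all add: regular_row_def c_def)
  then show ?thesis unfolding Fmap_nth c_def[symmetric] by (simp add: algebra_simps)
qed

lemma dJ_on_kernel:
  assumes "q \<in> regular_row i" "Dmat f q *v v = 0"
  shows "pd 1 (Jdet f) q * v$1 + pd 2 (Jdet f) q * v$2 =
    - ((v$1 * - df i 2 q + v$2 * df i 1 q) / ((df i 2 q)\<^sup>2 + (df i 1 q)\<^sup>2)) * Fmap f q $ i"
proof -
  have "df i 1 q * v$1 + df i 2 q * v$2 = 0" using assms(2) Dmat_mult_nth[of q v i] by simp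
  note proportional = row_orthogonal_proportional[OF assms(1) this]
  define c where "c = (v$1 * - df i 2 q + v$2 * df i 1 q) / ((df i 2 q)\<^sup>2 + (df i 1 q)\<^sup>2)"
  have "v$1 = - c * df i 2 q" "v$2 = c * df i 1 q"
    using arg_cong[where f="\<lambda>v. v$1", OF proportional] arg_cong[where f="\<lambda>v. v$2", OF proportional]
    by (simp_all add: c_def row_kernel_field_def)
  then show ?thesis unfolding Fmap_nth c_def[symmetric] by (simp add: algebra_simps)
qed

end

section \<open>Simple cusps\<close>

locale one_generic_point = one_generic_map +
  fixes p :: "real^2"
  assumes p_in_S1: "p \<in> S1 f"
begin

lemma Jdet_p: "Jdet f p = 0"
  using p_in_S1 S1_iff_Jdet_eq_0 by blast

lemma Jperp_p_nonzero: "Jperp f p \<noteq> 0"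
  using one_generic Jdet_p by (auto simp: one_generic_def Jperp_def vec_eq_iff forall_2)

lemma curve_through_p:
  obtains \<gamma> \<delta> where "\<delta> > 0" "\<gamma> 0 = p" "\<forall>t\<in>{-\<delta><..<\<delta>}. \<gamma> t \<in> S1 f"
    "(\<gamma> has_vector_derivative Jperp f p) (at 0)"
proof -
  have "grad (Jdet f) p \<noteq> 0"
    using one_generic Jdet_p by (auto simp: one_generic_def grad_def vec_eq_iff forall_2)
  from zero_set_curve[OF has_derivative_grad_smooth_alg[OF smooth_alg_Jdet]
      isCont_grad_smooth_alg[OF smooth_alg_Jdet] this Jdet_p grad_Jdet_inner_Jperp]
  show ?thesis using that S1_iff_Jdet_eq_0 by metis
qed

lemma tangent_space_S1_subset: "tangent_space (S1 f) p \<subseteq> range (\<lambda>c. c *\<^sub>R Jperp f p)"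
proof
  fix v assume "v \<in> tangent_space (S1 f) p"
  then obtain \<gamma> \<delta> where \<delta>: "\<delta> > 0" and \<gamma>0: "\<gamma> 0 = p" and in_S1: "\<forall>t\<in>{-\<delta><..<\<delta>}. \<gamma> t \<in> S1 f"
    and \<gamma>': "(\<gamma> has_vector_derivative v) (at 0)"
    unfolding tangent_space_def by blast
  have "((\<lambda>t. Jdet f (\<gamma> t)) has_real_derivative grad (Jdet f) p \<bullet> v) (at 0)"
    using has_real_derivative_comp_curve[OF \<gamma>'] has_derivative_grad_smooth_alg[OF smooth_alg_Jdet] \<gamma>0
    by simp
  moreover have "((\<lambda>t. Jdet f (\<gamma> t)) has_real_derivative 0) (at 0)"
    by (rule has_field_derivative_transform_within_open[of "\<lambda>t. 0" 0 0 "{-\<delta><..<\<delta>}"])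
      (use \<delta> in_S1 S1_iff_Jdet_eq_0 in auto)
  ultimately have "pd 1 (Jdet f) p * v$1 + pd 2 (Jdet f) p * v$2 = 0"
    using DERIV_unique grad_inner by metis
  then have "- pd 2 (Jdet f) p * v$2 - pd 1 (Jdet f) p * v$1 = 0" by simp
  from proportional_if_cross_eq_0[OF this] Jperp_p_nonzero
  have "v = ((v$1 * - pd 2 (Jdet f) p + v$2 * pd 1 (Jdet f) p) /
      ((- pd 2 (Jdet f) p)\<^sup>2 + (pd 1 (Jdet f) p)\<^sup>2)) *\<^sub>R Jperp f p"
    by (auto simp: vec_eq_iff forall_2 Jperp_def)
  then show "v \<in> range (\<lambda>c. c *\<^sub>R Jperp f p)" by blast
qed

lemma scaled_Jperp_in_tangent_space: "c *\<^sub>R Jperp f p \<in> tangent_space (S1 f) p"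
proof -
  obtain \<gamma> \<delta> where \<delta>: "\<delta> > 0" and \<gamma>0: "\<gamma> 0 = p" and in_S1: "\<forall>t\<in>{-\<delta><..<\<delta>}. \<gamma> t \<in> S1 f"
    and \<gamma>': "(\<gamma> has_vector_derivative Jperp f p) (at 0)"
    using curve_through_p by blast
  have "((\<lambda>t. c * t) has_vector_derivative c) (at 0)"
    using DERIV_cmult_Id[of c 0] by (simp add: has_real_derivative_iff_has_vector_derivative)
  then have "(\<gamma> \<circ> (\<lambda>t. c * t) has_vector_derivative c *\<^sub>R Jperp f p) (at 0)"
    by (rule vector_diff_chain_at) (simp add: \<gamma>')
  moreover have "(\<gamma> \<circ> (\<lambda>t. c * t)) t \<in> S1 f" if "t \<in> {-(\<delta> / (\<bar>c\<bar> + 1))<..<\<delta> / (\<bar>c\<bar> + 1)}" for t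
  proof -
    have "\<bar>c * t\<bar> \<le> (\<bar>c\<bar> + 1) * \<bar>t\<bar>" by (simp add: abs_mult mult_right_mono)
    also have "\<dots> < \<delta>"
      using that pos_less_divide_eq[of "\<bar>c\<bar> + 1" "\<bar>t\<bar>" \<delta>] by (auto simp: abs_less_iff mult.commute)
    finally show ?thesis using in_S1 by (simp add: abs_less_iff)
  qed
  moreover have "\<delta> / (\<bar>c\<bar> + 1) > 0" using \<delta> by (simp add: add_nonneg_pos)
  ultimately show ?thesis
    unfolding tangent_space_def using \<gamma>0 by (intro CollectI exI[of _ "\<gamma> \<circ> (\<lambda>t. c * t)"]) auto
qed

lemma tangent_space_S1: "tangent_space (S1 f) p = range (\<lambda>c. c *\<^sub>R Jperp f p)"
  using tangent_space_S1_subset scaled_Jperp_in_tangent_space by blast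

lemma kernel_Dmat_p:
  assumes "Fmap f p = 0"
  shows "{v. Dmat f p *v v = 0} = range (\<lambda>c. c *\<^sub>R Jperp f p)"
proof (intro set_eqI iffI)
  fix v assume "v \<in> {v. Dmat f p *v v = 0}"
  then have v: "df i 1 p * v$1 + df i 2 p * v$2 = 0" for i
    using Dmat_mult_nth[of p v i] by simp
  have w: "df i 1 p * Jperp f p $ 1 + df i 2 p * Jperp f p $ 2 = 0" for i
    using assms Dmat_mult_Jperp[of p] Dmat_mult_nth[of p "Jperp f p" i] by simp
  obtain i where i: "p \<in> regular_row i" using S1_subset_regular_row p_in_S1 by blast
  obtain a b where "v = a *\<^sub>R row_kernel_field i p" "Jperp f p = b *\<^sub>R row_kernel_field i p"
    using row_orthogonal_proportional[OF i v] row_orthogonal_proportional[OF i w] by blast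
  moreover have "b \<noteq> 0" using calculation(2) Jperp_p_nonzero by auto
  ultimately have "v = (a / b) *\<^sub>R Jperp f p" by simp
  then show "v \<in> range (\<lambda>c. c *\<^sub>R Jperp f p)" by blast
next
  fix v assume "v \<in> range (\<lambda>c. c *\<^sub>R Jperp f p)"
  then show "v \<in> {v. Dmat f p *v v = 0}"
    using assms Dmat_mult_Jperp[of p] by (auto simp: matrix_vector_mult_scaleR)
qed

lemma tangent_space_eq_kernel_iff:
  "tangent_space (S1 f) p = {v. Dmat f p *v v = 0} \<longleftrightarrow> Fmap f p = 0"
proof
  assume "tangent_space (S1 f) p = {v. Dmat f p *v v = 0}"
  then have "Jperp f p \<in> {v. Dmat f p *v v = 0}"
    unfolding tangent_space_S1 by (metis rangeI scaleR_one)
  then show "Fmap f p = 0" using Dmat_mult_Jperp[of p] by simp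
qed (simp add: tangent_space_S1 kernel_Dmat_p)

abbreviation cusp_coeff :: "2 \<Rightarrow> real" where
  "cusp_coeff i \<equiv> jac2 (Jdet f) (\<lambda>q. Fmap f q $ i) p"

lemma has_real_derivative_Fmap_along:
  assumes "(\<gamma> has_vector_derivative c *\<^sub>R Jperp f p) (at 0)" "\<gamma> 0 = p"
  shows "((\<lambda>t. Fmap f (\<gamma> t) $ i) has_real_derivative c * cusp_coeff i) (at 0)"
  using has_real_derivative_comp_curve[OF assms(1) has_derivative_grad_smooth_alg[OF smooth_alg_Fmap]]
    grad_Fmap_inner_Jperp assms(2) by (simp add: inner_scaleR_right)

lemma cusp_coeff_eq_0_transfer:
  assumes F0: "Fmap f p = 0" and i: "p \<in> regular_row i" and "cusp_coeff i = 0"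
  shows "cusp_coeff k = 0"
proof -
  define h where
    "h q = (df k 1 q * df i 1 q + df k 2 q * df i 2 q) / ((df i 1 q)\<^sup>2 + (df i 2 q)\<^sup>2)" for q
  have "h differentiable (at p)"
    using i unfolding h_def regular_row_def
    by (intro differentiable_divide differentiable_add differentiable_mult differentiable_power
        smooth_alg_differentiable smooth_alg_df) (auto simp: sum_power2_eq_zero_iff)
  obtain \<gamma> \<delta> where \<delta>: "\<delta> > 0" and \<gamma>0: "\<gamma> 0 = p" and in_S1: "\<forall>t\<in>{-\<delta><..<\<delta>}. \<gamma> t \<in> S1 f"
    and \<gamma>': "(\<gamma> has_vector_derivative Jperp f p) (at 0)"
    using curve_through_p by blast
  have "eventually (\<lambda>t. \<gamma> t \<in> S1 f \<inter> regular_row i) (nhds 0)"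
    using eventually_curve_in[OF \<gamma>' \<delta> in_S1 open_regular_row] \<gamma>0 i by simp
  then have "eventually (\<lambda>t. Fmap f (\<gamma> t) $ k = h (\<gamma> t) * Fmap f (\<gamma> t) $ i) (nhds 0)"
  proof (rule eventually_mono)
    fix t assume "\<gamma> t \<in> S1 f \<inter> regular_row i"
    then show "Fmap f (\<gamma> t) $ k = h (\<gamma> t) * Fmap f (\<gamma> t) $ i"
      using Fmap_proportional_on_S1[of "\<gamma> t" i k] unfolding h_def by blast
  qed
  then have "cusp_coeff k = h p * (grad (\<lambda>q. Fmap f q $ i) p \<bullet> Jperp f p)"
    using has_real_derivative_along_factorization[OF \<gamma>' \<gamma>0
        has_real_derivative_Fmap_along[of _ 1, simplified, OF \<gamma>' \<gamma>0]
        has_derivative_grad_smooth_alg[OF smooth_alg_Fmap]] F0 \<open>h differentiable (at p)\<close>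
    by simp
  then show ?thesis using assms(3) grad_Fmap_inner_Jperp by simp
qed

lemma simple_cusp_if_cusp_coeff:
  assumes F0: "Fmap f p = 0" and "cusp_coeff k \<noteq> 0"
  shows "simple_cusp f p"
proof -
  obtain i where i: "p \<in> regular_row i" using S1_subset_regular_row p_in_S1 by blast
  have coeff: "cusp_coeff i \<noteq> 0" using cusp_coeff_eq_0_transfer[OF F0 i] assms(2) by blast
  obtain \<gamma> \<delta> where \<delta>: "\<delta> > 0" and \<gamma>0: "\<gamma> 0 = p" and in_S1: "\<forall>t\<in>{-\<delta><..<\<delta>}. \<gamma> t \<in> S1 f"
    and \<gamma>': "(\<gamma> has_vector_derivative Jperp f p) (at 0)"
    using curve_through_p by blast
  have "eventually (\<lambda>t. \<gamma> t \<in> S1 f \<inter> regular_row i) (nhds 0)"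
    using eventually_curve_in[OF \<gamma>' \<delta> in_S1 open_regular_row] \<gamma>0 i by simp
  then obtain \<delta>' where \<delta>': "\<delta>' > 0" "\<forall>t\<in>{-\<delta>'<..<\<delta>'}. \<gamma> t \<in> S1 f \<inter> regular_row i"
    unfolding eventually_nhds_metric by (auto simp: dist_real_def abs_less_iff)
  have "(((\<lambda>q. - Fmap f q $ i) \<circ> \<gamma>) has_real_derivative - cusp_coeff i) (at 0)"
    using DERIV_minus[OF has_real_derivative_Fmap_along[of _ 1, simplified, OF \<gamma>' \<gamma>0]]
    by (simp add: o_def)
  then have "simple_zero_on (S1 f) (regular_row i) (\<lambda>q. - Fmap f q $ i) p"
    unfolding simple_zero_on_def using F0 \<delta>' \<gamma>0 \<gamma>' Jperp_p_nonzero coeff by fastforce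
  then show ?thesis
    unfolding simple_cusp_def tangent_space_eq_kernel_iff
    using p_in_S1 F0 open_regular_row i smooth_on_row_kernel_field row_kernel_field_in_kernel
    by (intro conjI exI[of _ "regular_row i"] exI[of _ "row_kernel_field i"])
      (auto simp: dJ_row_kernel_field)
qed

lemma dJ_kernel_field_factorization:
  assumes U: "open U" "p \<in> U" and smooth_\<xi>: "\<forall>j. smooth_on U (\<lambda>q. \<xi> q $ j)"
    and kernel: "\<forall>q\<in>U \<inter> S1 f. Dmat f q *v \<xi> q = 0" and i: "p \<in> regular_row i"
  obtains h where "h differentiable (at p)"
    "\<And>q. q \<in> U \<inter> S1 f \<inter> regular_row i \<Longrightarrow>
      pd 1 (Jdet f) q * \<xi> q $ 1 + pd 2 (Jdet f) q * \<xi> q $ 2 = h q * Fmap f q $ i"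
proof
  define h where
    "h q = - ((\<xi> q $ 1 * - df i 2 q + \<xi> q $ 2 * df i 1 q) / ((df i 2 q)\<^sup>2 + (df i 1 q)\<^sup>2))" for q
  have \<xi>_differentiable: "(\<lambda>q. \<xi> q $ j) differentiable (at p)" for j
    using smooth_\<xi> U(2) by (metis smooth_on.cases)
  have df_differentiable: "df k j differentiable (at p)" for k j
    by (rule smooth_alg_differentiable[OF smooth_alg_df])
  show "h differentiable (at p)"
    using i unfolding h_def regular_row_def
    by (intro differentiable_minus differentiable_divide differentiable_add differentiable_mult
        differentiable_power \<xi>_differentiable df_differentiable) (auto simp: sum_power2_eq_zero_iff)
  fix q assume "q \<in> U \<inter> S1 f \<inter> regular_row i"
  then show "pd 1 (Jdet f) q * \<xi> q $ 1 + pd 2 (Jdet f) q * \<xi> q $ 2 = h q * Fmap f q $ i"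
    using dJ_on_kernel[of q i "\<xi> q"] kernel unfolding h_def by auto
qed

lemma cusp_coeff_if_simple_cusp:
  assumes "simple_cusp f p"
  shows "Fmap f p = 0" "\<exists>k. cusp_coeff k \<noteq> 0"
proof -
  show F0: "Fmap f p = 0" using assms tangent_space_eq_kernel_iff by (simp add: simple_cusp_def)
  obtain U \<xi> where U: "open U" "p \<in> U" and smooth_\<xi>: "\<forall>j. smooth_on U (\<lambda>q. \<xi> q $ j)"
    and kernel: "\<forall>q\<in>U \<inter> S1 f. \<xi> q \<noteq> 0 \<and> Dmat f q *v \<xi> q = 0"
    and zero: "simple_zero_on (S1 f) U (\<lambda>q. pd 1 (Jdet f) q * \<xi> q $ 1 + pd 2 (Jdet f) q * \<xi> q $ 2) p"
    using assms unfolding simple_cusp_def by blast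
  obtain \<gamma> \<delta> v d where \<delta>: "\<delta> > 0" and \<gamma>0: "\<gamma> 0 = p" and in_S1: "\<forall>t\<in>{-\<delta><..<\<delta>}. \<gamma> t \<in> S1 f \<inter> U"
    and \<gamma>': "(\<gamma> has_vector_derivative v) (at 0)"
    and d: "((\<lambda>t. pd 1 (Jdet f) (\<gamma> t) * \<xi> (\<gamma> t) $ 1 + pd 2 (Jdet f) (\<gamma> t) * \<xi> (\<gamma> t) $ 2)
        has_real_derivative d) (at 0)" "d \<noteq> 0"
    using zero unfolding simple_zero_on_def o_def by blast
  have "v \<in> tangent_space (S1 f) p"
    unfolding tangent_space_def using \<delta> \<gamma>0 in_S1 \<gamma>' by blast
  then obtain c where v: "v = c *\<^sub>R Jperp f p" unfolding tangent_space_S1 by blast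
  obtain i where i: "p \<in> regular_row i" using S1_subset_regular_row p_in_S1 by blast
  obtain h where h: "h differentiable (at p)" and factor:
    "\<And>q. q \<in> U \<inter> S1 f \<inter> regular_row i \<Longrightarrow>
      pd 1 (Jdet f) q * \<xi> q $ 1 + pd 2 (Jdet f) q * \<xi> q $ 2 = h q * Fmap f q $ i"
    using dJ_kernel_field_factorization[OF U smooth_\<xi> _ i] kernel by blast
  have "eventually (\<lambda>t. \<gamma> t \<in> S1 f \<inter> U \<inter> regular_row i) (nhds 0)"
    using eventually_curve_in[OF \<gamma>' \<delta> in_S1 open_regular_row] \<gamma>0 i by simp
  then have "eventually (\<lambda>t. pd 1 (Jdet f) (\<gamma> t) * \<xi> (\<gamma> t) $ 1 + pd 2 (Jdet f) (\<gamma> t) * \<xi> (\<gamma> t) $ 2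
      = h (\<gamma> t) * Fmap f (\<gamma> t) $ i) (nhds 0)"
    by (rule eventually_mono) (simp add: factor Int_commute)
  then have "d = h p * (grad (\<lambda>q. Fmap f q $ i) p \<bullet> v)"
    using has_real_derivative_along_factorization[OF \<gamma>' \<gamma>0 d(1)
        has_derivative_grad_smooth_alg[OF smooth_alg_Fmap]] F0 h
    by simp
  then have "d = h p * c * cusp_coeff i"
    using v grad_Fmap_inner_Jperp by (simp add: inner_scaleR_right)
  then show "\<exists>k. cusp_coeff k \<noteq> 0" using d(2) by auto
qed

lemma simple_cusp_iff: "simple_cusp f p \<longleftrightarrow> Fmap f p = 0 \<and> (\<exists>k. cusp_coeff k \<noteq> 0)"
  using simple_cusp_if_cusp_coeff cusp_coeff_if_simple_cusp by blast

end

theorem mainTheorem7: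
  fixes f :: "real^2 \<Rightarrow> real^2" and p :: "real^2"
  assumes "smooth_map f" and "one_generic f" and "p \<in> S1 f"
  shows "(simple_cusp f p \<longleftrightarrow> Fmap f p = 0 \<and> Dmat (Fmap f) p *v Jperp f p \<noteq> 0)
       \<and> (simple_cusp f p \<longleftrightarrow> Jdet f p = 0 \<and> Fmap f p $ 1 = 0 \<and> Fmap f p $ 2 = 0 \<and>
            (jac2 (Jdet f) (\<lambda>q. Fmap f q $ 1) p \<noteq> 0 \<or> jac2 (Jdet f) (\<lambda>q. Fmap f q $ 2) p \<noteq> 0))"
proof -
  interpret one_generic_point f p using assms by unfold_locales
  have "Dmat (Fmap f) p *v Jperp f p \<noteq> 0 \<longleftrightarrow> (\<exists>k. cusp_coeff k \<noteq> 0)"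
    by (simp add: vec_eq_iff matrix_vector_mult_def sum_2 Dmat_def jac2_def Jperp_def algebra_simps)
  moreover have "(\<exists>k. cusp_coeff k \<noteq> 0) \<longleftrightarrow> cusp_coeff 1 \<noteq> 0 \<or> cusp_coeff 2 \<noteq> 0"
    using forall_2[of "\<lambda>k. cusp_coeff k = 0"] by blast
  moreover have "Fmap f p = 0 \<longleftrightarrow> Fmap f p $ 1 = 0 \<and> Fmap f p $ 2 = 0"
    by (simp add: vec_eq_iff forall_2)
  ultimately show ?thesis using simple_cusp_iff Jdet_p by blast
qed

end
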